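(* Let $A$ be a finite alphabet. A sliding block code $\phi: A^{\mathbb{N}} \to A^{\mathbb{N}}$ is a local homeomorphism and $*$-commutes with the shift map $\sigma$ if and only if $\phi$ is a $k$-fold covering map (for some $k\in\mathbb{N}$) of the form $\phi=\tau_d$ for a regressive block map $d$.
   Context: $A$ is a finite set with the discrete topology; $\mathbb{N}=\{1,2,3,\dots\}$; $A^{\mathbb{N}}$ is the space of one-sided infinite sequences over $A$ with the product topology; $\sigma(x_1x_2x_3\cdots)=x_2x_3\cdots$. A block map is a function $d:A^n\to A$ ($n\in\mathbb{N}$), and $\tau_d: A^{\mathbb{N}}\to A^{\mathbb{N}}$ is $\tau_d(x)_i=d(x_i\cdots x_{i+n-1})$; a sliding block code is a map of the form $\tau_d$. The block map $d$ is regressive if for each fixed $x_1\cdots x_{n-1}\in A^{n-1}$ the map $A\to A$, $a\mapsto d(ax_1\cdots x_{n-1})$, is bijective. A continuous map $f:X\to Y$ is a local homeomorphism if every $x\in X$ has an open neighborhood $U$ such that $f(U)$ is open in $Y$ and $f:U\to f(U)$ is a homeomorphism. Two functions $S,T: X\to X$ $*$-commute if $ST=TS$ and for every $(y,z)$ with $S(y)=T(z)$ there exists a unique $x$ with $T(x)=y$ and $S(x)=z$. For a continuous surjection $p:E\to B$, an open set $U\subseteq B$ is evenly covered if $p^{-1}(U)$ is a union of pairwise disjoint open sets $V_\alpha$ each of which $p$ maps homeomorphically onto $U$; $p$ is a covering map if every point of $B$ has an evenly covered open neighborhood, and a $k$-fold covering map if moreover $|p^{-1}(b)|=k$ for every $b\in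 B$. *)

theory Defs
  imports "HOL-Analysis.Analysis"
begin

text \<open>The space A^N (indices shifted to start at 0) with the product of discrete topologies.\<close>
definition seq_top :: "(nat \<Rightarrow> 'a) topology" where
  "seq_top = product_topology (\<lambda>_. discrete_topology UNIV) UNIV"

definition shift :: "(nat \<Rightarrow> 'a) \<Rightarrow> (nat \<Rightarrow> 'a)" where
  "shift x = (\<lambda>i. x (Suc i))"

text \<open>A block map d : A^n \<rightarrow> A is represented by a function on lists, of which
  only the values on lists of length n matter.\<close>
definition tau :: "nat \<Rightarrow> ('a list \<Rightarrow> 'a) \<Rightarrow> (nat \<Rightarrow> 'a) \<Rightarrow> (nat \<Rightarrow> 'a)" where
  "tau n d x = (\<lambda>i. d (map x [i..<i+n]))"

definition sliding_block_code :: "((nat \<Rightarrow> 'a) \<Rightarrow> (nat \<Rightarrow> 'a)) \<Rightarrow> bool" where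
  "sliding_block_code \<phi> \<longleftrightarrow> (\<exists>n d. n \<ge> 1 \<and> \<phi> = tau n d)"

definition regressive :: "nat \<Rightarrow> ('a list \<Rightarrow> 'a) \<Rightarrow> bool" where
  "regressive n d \<longleftrightarrow> n \<ge> 1 \<and>
     (\<forall>w. length w = n - 1 \<longrightarrow> bij (\<lambda>a. d (a # w)))"

definition local_homeo :: "'a topology \<Rightarrow> 'b topology \<Rightarrow> ('a \<Rightarrow> 'b) \<Rightarrow> bool" where
  "local_homeo X Y f \<longleftrightarrow> continuous_map X Y f \<and>
     (\<forall>x\<in>topspace X. \<exists>U. openin X U \<and> x \<in> U \<and> openin Y (f ` U) \<and>
        homeomorphic_map (subtopology X U) (subtopology Y (f ` U)) f)"

definition star_commute :: "('a \<Rightarrow> 'a) \<Rightarrow> ('a \<Rightarrow> 'a) \<Rightarrow> bool" where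
  "star_commute S T \<longleftrightarrow> S \<circ> T = T \<circ> S \<and>
     (\<forall>y z. S y = T z \<longrightarrow> (\<exists>!x. T x = y \<and> S x = z))"

definition evenly_covered :: "'a topology \<Rightarrow> 'b topology \<Rightarrow> ('a \<Rightarrow> 'b) \<Rightarrow> 'b set \<Rightarrow> bool" where
  "evenly_covered E B p U \<longleftrightarrow> openin B U \<and>
     (\<exists>\<V>. (\<forall>V\<in>\<V>. openin E V \<and> homeomorphic_map (subtopology E V) (subtopology B U) p) \<and>
          pairwise disjnt \<V> \<and> \<Union>\<V> = {x \<in> topspace E. p x \<in> U})"

definition covering_map :: "'a topology \<Rightarrow> 'b topology \<Rightarrow> ('a \<Rightarrow> 'b) \<Rightarrow> bool" where
  "covering_map E B p \<longleftrightarrow> continuous_map E B p \<and> p ` topspace E = topspace B \<and>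
     (\<forall>b\<in>topspace B. \<exists>U. b \<in> U \<and> evenly_covered E B p U)"

definition k_fold_covering_map :: "nat \<Rightarrow> 'a topology \<Rightarrow> 'b topology \<Rightarrow> ('a \<Rightarrow> 'b) \<Rightarrow> bool" where
  "k_fold_covering_map k E B p \<longleftrightarrow> covering_map E B p \<and>
     (\<forall>b\<in>topspace B. finite {x \<in> topspace E. p x = b} \<and> card {x \<in> topspace E. p x = b} = k)"

end

theory Submission
  imports Defs
begin

text \<open>
  The shift-preimages of \<open>y\<close> are the sequences \<open>a y\<close> with \<open>a \<in> A\<close>, and
  \<open>\<tau>\<^sub>d (a y) = d(a y\<^sub>1 \<dots> y\<^sub>n\<^sub>-\<^sub>1) \<tau>\<^sub>d(y)\<close>. Hence \<open>\<tau>\<^sub>d\<close> star-commutes with \<open>\<sigma>\<close> iff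
  \<open>a \<mapsto> d(a w)\<close> is bijective for every word \<open>w\<close>, i.e. iff \<open>d\<close> is regressive; and every
  covering map is a local homeomorphism.

  Conversely, by compactness of \<open>A\<^sup>\<nat>\<close> a local homeomorphism \<open>f\<close> has a uniform radius \<open>M\<close>
  of injectivity and a uniform radius \<open>L\<close> such that \<open>f\<close> maps each \<open>M\<close>-cylinder onto the
  \<open>L\<close>-cylinder around the image of its centre. Then the fibres are finite, every
  \<open>L\<close>-cylinder is evenly covered, and the fibre cardinality is constant on it. If \<open>f\<close>
  star-commutes with \<open>\<sigma>\<close>, the shift maps the fibre over \<open>z\<close> bijectively onto the fibre
  over \<open>\<sigma> z\<close>; as every point is \<open>\<sigma>\<^sup>L\<close> of a point \<open>L\<close>-close to any given one, the
  fibre cardinality is constant.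
\<close>

section \<open>Cylinders\<close>

definition cylinder :: "nat \<Rightarrow> (nat \<Rightarrow> 'a) \<Rightarrow> (nat \<Rightarrow> 'a) set" where
  "cylinder m x = {y. \<forall>i<m. y i = x i}"

lemma topspace_seq_top [simp]: "topspace seq_top = UNIV"
  by (simp add: seq_top_def)

lemma cylinder_self [simp]: "x \<in> cylinder m x"
  by (simp add: cylinder_def)

lemma cylinder_antimono: "m \<le> m' \<Longrightarrow> cylinder m' x \<subseteq> cylinder m x"
  by (auto simp: cylinder_def)

lemma cylinder_sym: "y \<in> cylinder m x \<Longrightarrow> x \<in> cylinder m y"
  by (auto simp: cylinder_def)

lemma cylinder_eq: "y \<in> cylinder m x \<Longrightarrow> cylinder m y = cylinder m x"
  by (auto simp: cylinder_def)

lemma cylinder_common: "z \<in> cylinder m x \<Longrightarrow> z \<in> cylinder m y \<Longrightarrow> y \<in> cylinder m x"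
  by (auto simp: cylinder_def)

lemma PiE_UNIV_iff: "y \<in> Pi\<^sub>E UNIV U \<longleftrightarrow> (\<forall>i. y i \<in> U i)"
  by (simp add: PiE_UNIV_domain Pi_iff)

lemma openin_seq_top: "openin seq_top S \<longleftrightarrow> (\<forall>x\<in>S. \<exists>m. cylinder m x \<subseteq> S)"
proof
  assume "openin seq_top S"
  show "\<forall>x\<in>S. \<exists>m. cylinder m x \<subseteq> S"
  proof
    fix x assume "x \<in> S"
    then obtain U where U: "finite {i \<in> UNIV. U i \<noteq> topspace (discrete_topology UNIV)}"
        "x \<in> Pi\<^sub>E UNIV U" "Pi\<^sub>E UNIV U \<subseteq> S"
      using \<open>openin seq_top S\<close> unfolding seq_top_def openin_product_topology_alt by blast
    then obtain m where m: "\<And>i. U i \<noteq> UNIV \<Longrightarrow> i < m"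
      using finite_nat_bounded[of "{i. U i \<noteq> UNIV}"] by (auto simp: subset_iff)
    have "y \<in> Pi\<^sub>E UNIV U" if "y \<in> cylinder m x" for y
      unfolding PiE_UNIV_iff
    proof
      fix i show "y i \<in> U i"
        using that U(2) m[of i] by (cases "i < m") (auto simp: cylinder_def PiE_UNIV_iff)
    qed
    then have "cylinder m x \<subseteq> Pi\<^sub>E UNIV U" by blast
    then show "\<exists>m. cylinder m x \<subseteq> S" using U(3) by blast
  qed
next
  assume cyl: "\<forall>x\<in>S. \<exists>m. cylinder m x \<subseteq> S"
  show "openin seq_top S"
    unfolding seq_top_def openin_product_topology_alt
  proof
    fix x assume "x \<in> S"
    then obtain m where m: "cylinder m x \<subseteq> S" using cyl by blast
    define U where "U i = (if i < m then {x i} else UNIV)" for i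
    have "finite {i. U i \<noteq> UNIV}"
      by (rule finite_subset[of _ "{..<m}"]) (auto simp: U_def)
    moreover have "Pi\<^sub>E UNIV U = cylinder m x"
      unfolding PiE_UNIV_iff U_def cylinder_def by (auto split: if_splits)
    ultimately show "\<exists>U. finite {i \<in> UNIV. U i \<noteq> topspace (discrete_topology UNIV)} \<and>
        (\<forall>i\<in>UNIV. openin (discrete_topology UNIV) (U i)) \<and> x \<in> Pi\<^sub>E UNIV U \<and> Pi\<^sub>E UNIV U \<subseteq> S"
      using m by (intro exI[of _ U]) auto
  qed
qed

lemma openin_seq_top_cylinder:
  assumes "openin seq_top S" "x \<in> S"
  obtains m where "cylinder m x \<subseteq> S"
  using assms unfolding openin_seq_top by blast

lemma openin_cylinder: "openin seq_top (cylinder m x)"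
  unfolding openin_seq_top by (metis cylinder_eq order_refl)

lemma compact_space_seq_top: "compact_space (seq_top :: (nat \<Rightarrow> 'a::finite) topology)"
  unfolding seq_top_def
  by (simp add: compact_space_product_topology compact_space_discrete_topology)

text \<open>A Lebesgue-number argument: finitely many cylinders cover the compact space.\<close>
lemma seq_top_uniform_bound:
  fixes Q :: "nat \<Rightarrow> (nat \<Rightarrow> 'a::finite) \<Rightarrow> bool"
  assumes local: "\<And>x. \<exists>m l. \<forall>y\<in>cylinder m x. Q l y"
    and mono: "\<And>l l' y. Q l y \<Longrightarrow> l \<le> l' \<Longrightarrow> Q l' y"
  shows "\<exists>L. \<forall>y. Q L y"
proof -
  define \<U> where "\<U> = {U. openin seq_top U \<and> (\<exists>l. \<forall>y\<in>U. Q l y)}"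
  have "UNIV \<subseteq> \<Union>\<U>"
  proof
    fix x :: "nat \<Rightarrow> 'a"
    obtain m l where "\<forall>y\<in>cylinder m x. Q l y" using local by blast
    then have "cylinder m x \<in> \<U>" unfolding \<U>_def using openin_cylinder by blast
    then show "x \<in> \<Union>\<U>" using cylinder_self by blast
  qed
  moreover have "\<forall>U\<in>\<U>. openin seq_top U" by (simp add: \<U>_def)
  ultimately obtain \<F> where \<F>: "finite \<F>" "\<F> \<subseteq> \<U>" "UNIV \<subseteq> \<Union>\<F>"
    using compact_space_seq_top[unfolded compact_space_alt topspace_seq_top, rule_format, of \<U>]
    by blast
  then have "\<forall>U\<in>\<F>. \<exists>l. \<forall>y\<in>U. Q l y" unfolding \<U>_def by blast
  then have "\<exists>bound. \<forall>U\<in>\<F>. \<forall>y\<in>U. Q (bound U) y" by (rule bchoice)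
  then obtain bound where bound: "\<forall>U\<in>\<F>. \<forall>y\<in>U. Q (bound U) y" by blast
  have "Q (Max (bound ` \<F>)) y" for y
  proof -
    obtain U where U: "U \<in> \<F>" "y \<in> U" using \<F>(3) by blast
    then show ?thesis
      using bound mono Max_ge[OF finite_imageI[OF \<F>(1)] imageI[OF U(1)]] by blast
  qed
  then show ?thesis by blast
qed

section \<open>Local homeomorphisms and covering maps\<close>

lemma local_homeo_imp_open_map:
  assumes "local_homeo X Y f"
  shows "open_map X Y f"
  unfolding open_map_def
proof (intro allI impI)
  fix W assume W: "openin X W"
  show "openin Y (f ` W)"
    unfolding openin_subopen[of _ "f ` W"]
  proof
    fix b assume "b \<in> f ` W"
    then obtain x where x: "x \<in> W" "b = f x" by blast
    then obtain U where U: "openin X U" "x \<in> U" "openin Y (f ` U)"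
      "homeomorphic_map (subtopology X U) (subtopology Y (f ` U)) f"
      using assms openin_subset[OF W] unfolding local_homeo_def by blast
    have "openin (subtopology X U) (W \<inter> U)"
      using W U(1) by (simp add: openin_open_subtopology openin_Int)
    then have "openin (subtopology Y (f ` U)) (f ` (W \<inter> U))"
      using homeomorphic_map_openness_eq[OF U(4)] by blast
    then have "openin Y (f ` (W \<inter> U))"
      using openin_open_subtopology[OF U(3)] by blast
    then show "\<exists>T. openin Y T \<and> b \<in> T \<and> T \<subseteq> f ` W"
      using x U(2) by blast
  qed
qed

lemma local_homeo_locally_injective:
  assumes "local_homeo X Y f" and "x \<in> topspace X"
  obtains U where "openin X U" "x \<in> U" "inj_on f U"
  using assms homeomorphic_imp_injective_map unfolding local_homeo_def
  by (metis openin_subset topspace_subtopology_subset)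

lemma covering_map_imp_local_homeo:
  assumes cov: "covering_map E B p"
  shows "local_homeo E B p"
  unfolding local_homeo_def
proof (intro conjI ballI)
  show "continuous_map E B p" using cov by (simp add: covering_map_def)
next
  fix x assume x: "x \<in> topspace E"
  then obtain U \<V> where "p x \<in> U" "openin B U"
    "\<forall>V\<in>\<V>. openin E V \<and> homeomorphic_map (subtopology E V) (subtopology B U) p"
    "\<Union>\<V> = {x \<in> topspace E. p x \<in> U}"
    using cov unfolding covering_map_def evenly_covered_def by blast
  then obtain V where V: "x \<in> V" "openin E V" "homeomorphic_map (subtopology E V) (subtopology B U) p"
    using x by blast
  moreover have "p ` V = U"
    using homeomorphic_imp_surjective_map[OF V(3)] openin_subset[OF V(2)] openin_subset[OF \<open>openin B U\<close>]
    by (simp add: Int_absorb1)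
  ultimately show "\<exists>U. openin E U \<and> x \<in> U \<and> openin B (p ` U) \<and>
      homeomorphic_map (subtopology E U) (subtopology B (p ` U)) p"
    using \<open>openin B U\<close> by metis
qed

lemma star_commute_bij_betw_fibres:
  assumes "star_commute S T"
  shows "bij_betw T {x. S x = z} {x. S x = T z}"
proof -
  have comm: "S (T x) = T (S x)" for x
    using assms unfolding star_commute_def by (metis comp_apply)
  have unique: "S y = T z \<Longrightarrow> \<exists>!x. T x = y \<and> S x = z" for y z
    using assms unfolding star_commute_def by blast
  show ?thesis
    unfolding bij_betw_def
  proof
    show "inj_on T {x. S x = z}"
    proof (rule inj_onI)
      fix x x' assume "x \<in> {x. S x = z}" "x' \<in> {x. S x = z}" "T x = T x'"
      moreover have "S (T x) = T z" using comm \<open>x \<in> {x. S x = z}\<close> by simp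
      ultimately show "x = x'" using unique[of "T x" z] by auto
    qed
    show "T ` {x. S x = z} = {x. S x = T z}"
    proof (intro equalityI subsetI)
      fix y assume "y \<in> {x. S x = T z}"
      then obtain x where "T x = y" "S x = z" using unique[of y z] by auto
      then show "y \<in> T ` {x. S x = z}" by blast
    qed (use comm in auto)
  qed
qed

section \<open>Uniform radii of a local homeomorphism of the sequence space\<close>

lemma local_homeo_injectivity_radius:
  fixes f :: "(nat \<Rightarrow> 'a::finite) \<Rightarrow> (nat \<Rightarrow> 'b)"
  assumes "local_homeo seq_top Y f"
  shows "\<exists>M. \<forall>y. \<forall>z\<in>cylinder M y. f z = f y \<longrightarrow> z = y"
proof (rule seq_top_uniform_bound)
  fix x
  obtain U where U: "openin seq_top U" "x \<in> U" "inj_on f U"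
    using local_homeo_locally_injective[OF assms] by auto
  then obtain m where "cylinder m x \<subseteq> U" using openin_seq_top_cylinder by blast
  have "z = y" if "y \<in> cylinder m x" "z \<in> cylinder m y" "f z = f y" for y z
  proof -
    have "z \<in> cylinder m x" using that(1,2) cylinder_eq by blast
    then show "z = y" using inj_onD[OF U(3)] \<open>cylinder m x \<subseteq> U\<close> that by blast
  qed
  then show "\<exists>m l. \<forall>y\<in>cylinder m x. \<forall>z\<in>cylinder l y. f z = f y \<longrightarrow> z = y" by blast
next
  fix l l' y
  assume "\<forall>z\<in>cylinder l y. f z = f y \<longrightarrow> z = y" "l \<le> l'"
  then show "\<forall>z\<in>cylinder l' y. f z = f y \<longrightarrow> z = y" using cylinder_antimono[of l l' y] by blast
qed

lemma continuous_open_map_image_radius: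
  fixes f :: "(nat \<Rightarrow> 'a::finite) \<Rightarrow> (nat \<Rightarrow> 'b)"
  assumes cont: "continuous_map seq_top seq_top f" and open_map: "open_map seq_top seq_top f"
  shows "\<exists>L. \<forall>y. cylinder L (f y) \<subseteq> f ` cylinder M y"
proof (rule seq_top_uniform_bound)
  fix x
  have "openin seq_top (f ` cylinder M x)"
    using open_map openin_cylinder unfolding open_map_def by blast
  moreover have "f x \<in> f ` cylinder M x" by simp
  ultimately obtain l where l: "cylinder l (f x) \<subseteq> f ` cylinder M x"
    by (rule openin_seq_top_cylinder)
  have "openin seq_top {y. f y \<in> cylinder l (f x)}"
    using openin_continuous_map_preimage[OF cont openin_cylinder] by simp
  moreover have "x \<in> {y. f y \<in> cylinder l (f x)}" by simp
  ultimately obtain m where m: "cylinder m x \<subseteq> {y. f y \<in> cylinder l (f x)}"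
    by (rule openin_seq_top_cylinder)
  have "cylinder l (f y) \<subseteq> f ` cylinder M y" if "y \<in> cylinder (max m M) x" for y
  proof -
    have "y \<in> cylinder m x" "y \<in> cylinder M x"
      using that cylinder_antimono[of m "max m M" x] cylinder_antimono[of M "max m M" x] by auto
    then have "cylinder M y = cylinder M x" "cylinder l (f y) = cylinder l (f x)"
      using m cylinder_eq by blast+
    then show ?thesis using l by simp
  qed
  then show "\<exists>m l. \<forall>y\<in>cylinder m x. cylinder l (f y) \<subseteq> f ` cylinder M y" by blast
next
  fix l l' y
  assume "cylinder l (f y) \<subseteq> f ` cylinder M y" "l \<le> l'"
  then show "cylinder l' (f y) \<subseteq> f ` cylinder M y" using cylinder_antimono[of l l' "f y"] by blast
qed

locale uniform_local_homeo =
  fixes f :: "(nat \<Rightarrow> 'a::finite) \<Rightarrow> (nat \<Rightarrow> 'a)" and M L :: nat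
  assumes local_homeo: "local_homeo seq_top seq_top f"
    and injectivity_radius: "\<And>y z. z \<in> cylinder M y \<Longrightarrow> f z = f y \<Longrightarrow> z = y"
    and image_radius: "\<And>y. cylinder L (f y) \<subseteq> f ` cylinder M y"
begin

lemma continuous: "continuous_map seq_top seq_top f"
  using local_homeo by (simp add: local_homeo_def)

lemma open_map: "open_map seq_top seq_top f"
  using local_homeo by (rule local_homeo_imp_open_map)

lemma inj_on_cylinder: "inj_on f (cylinder M x)"
  by (rule inj_onI) (metis cylinder_eq cylinder_sym injectivity_radius)

lemma finite_fibre: "finite {x. f x = b}"
proof -
  have "inj_on (\<lambda>x. map x [0..<M]) {x. f x = b}"
    by (rule inj_onI) (auto simp: cylinder_def map_eq_conv intro: injectivity_radius)
  moreover have "finite {xs. set xs \<subseteq> (UNIV :: 'a set) \<and> length xs = M}"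
    by (rule finite_lists_length_eq) simp
  moreover have "(\<lambda>x. map x [0..<M]) ` {x. f x = b} \<subseteq> {xs. set xs \<subseteq> UNIV \<and> length xs = M}"
    by auto
  ultimately show ?thesis by (meson finite_imageD finite_subset)
qed

lemma one_le_card_fibre: "1 \<le> card {x. f x = f y}"
  using finite_fibre by (simp add: Suc_le_eq card_gt_0_iff) blast

text \<open>Send each point of the fibre over \<open>b\<close> to a point of its \<open>M\<close>-cylinder over \<open>b'\<close>;
  distinct points of a fibre lie in disjoint \<open>M\<close>-cylinders.\<close>
lemma card_fibre_le:
  assumes b': "b' \<in> cylinder L b"
  shows "card {x. f x = b} \<le> card {x. f x = b'}"
proof -
  have "\<forall>x\<in>{x. f x = b}. \<exists>x'. x' \<in> cylinder M x \<and> f x' = b'"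
  proof
    fix x assume "x \<in> {x. f x = b}"
    then have "b' \<in> f ` cylinder M x" using image_radius[of x] b' by auto
    then show "\<exists>x'. x' \<in> cylinder M x \<and> f x' = b'" by auto
  qed
  then have "\<exists>g. \<forall>x\<in>{x. f x = b}. g x \<in> cylinder M x \<and> f (g x) = b'" by (rule bchoice)
  then obtain g where g: "\<forall>x\<in>{x. f x = b}. g x \<in> cylinder M x \<and> f (g x) = b'" by blast
  have "inj_on g {x. f x = b}"
  proof (rule inj_onI)
    fix x y assume xy: "x \<in> {x. f x = b}" "y \<in> {x. f x = b}" "g x = g y"
    then have "y \<in> cylinder M x" using g cylinder_common by metis
    then show "x = y" using xy(1,2) injectivity_radius by auto
  qed
  moreover have "g ` {x. f x = b} \<subseteq> {x. f x = b'}" using g by auto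
  ultimately show ?thesis using finite_fibre by (rule card_inj_on_le)
qed

lemma card_fibre_cylinder:
  assumes "b' \<in> cylinder L b"
  shows "card {x. f x = b'} = card {x. f x = b}"
  using card_fibre_le[OF assms] card_fibre_le[OF cylinder_sym[OF assms]] by linarith

lemma openin_sheet: "openin seq_top U \<Longrightarrow> openin seq_top (cylinder M x \<inter> {z. f z \<in> U})"
  using openin_Int[OF openin_cylinder openin_continuous_map_preimage[OF continuous]] by simp

lemma homeomorphic_map_sheet:
  fixes x :: "nat \<Rightarrow> 'a"
  defines "S \<equiv> cylinder M x \<inter> {z. f z \<in> cylinder L (f x)}"
  shows "homeomorphic_map (subtopology seq_top S) (subtopology seq_top (cylinder L (f x))) f"
proof (rule bijective_open_imp_homeomorphic_map)
  have S: "openin seq_top S" unfolding S_def by (rule openin_sheet[OF openin_cylinder])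
  show "continuous_map (subtopology seq_top S) (subtopology seq_top (cylinder L (f x))) f"
    using continuous_map_from_subtopology[OF continuous]
    by (rule continuous_map_into_subtopology) (auto simp: S_def)
  show "open_map (subtopology seq_top S) (subtopology seq_top (cylinder L (f x))) f"
    using open_map_from_subtopology[OF open_map S]
    by (rule open_map_into_subtopology) (auto simp: S_def)
  show "f ` topspace (subtopology seq_top S) = topspace (subtopology seq_top (cylinder L (f x)))"
    using image_radius[of x] by (auto simp: S_def)
  show "inj_on f (topspace (subtopology seq_top S))"
    using inj_on_cylinder by (simp add: S_def inj_on_Int)
qed

lemma evenly_covered_cylinder: "evenly_covered seq_top seq_top f (cylinder L b)"
  unfolding evenly_covered_def
proof (intro conjI exI)
  let ?U = "cylinder L b"
  let ?sheet = "\<lambda>x. cylinder M x \<inter> {z. f z \<in> ?U}"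
  let ?\<V> = "?sheet ` {x. f x = b}"
  show "openin seq_top ?U" by (rule openin_cylinder)
  show "\<forall>V\<in>?\<V>. openin seq_top V \<and> homeomorphic_map (subtopology seq_top V) (subtopology seq_top ?U) f"
  proof
    fix V assume "V \<in> ?\<V>"
    then obtain x where "b = f x" "V = ?sheet x" by blast
    then show "openin seq_top V \<and> homeomorphic_map (subtopology seq_top V) (subtopology seq_top ?U) f"
      using openin_sheet[OF openin_cylinder] homeomorphic_map_sheet[of x] by simp
  qed
  show "pairwise disjnt ?\<V>"
  proof (rule pairwise_imageI)
    fix x y assume "x \<in> {x. f x = b}" "y \<in> {x. f x = b}" "x \<noteq> y"
    then have "y \<notin> cylinder M x" using injectivity_radius by auto
    then show "disjnt (?sheet x) (?sheet y)"
      unfolding disjnt_def using cylinder_common by blast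
  qed
  show "\<Union>?\<V> = {x \<in> topspace seq_top. f x \<in> ?U}"
  proof (intro equalityI subsetI)
    fix x' assume "x' \<in> {x \<in> topspace seq_top. f x \<in> ?U}"
    then have "b \<in> cylinder L (f x')" using cylinder_sym by simp
    then obtain x where "x \<in> cylinder M x'" "f x = b" using image_radius[of x'] by blast
    then show "x' \<in> \<Union>?\<V>"
      using \<open>b \<in> cylinder L (f x')\<close> cylinder_sym by blast
  qed auto
qed

lemma k_fold_covering_map:
  assumes card: "\<And>b. card {x. f x = b} = k"
  shows "k_fold_covering_map k seq_top seq_top f"
  unfolding k_fold_covering_map_def covering_map_def
proof (intro conjI ballI continuous)
  have "\<exists>x. f x = b" for b
  proof -
    have "1 \<le> card {x. f x = b}"
      using card[of b] card[of "f undefined"] one_le_card_fibre[of undefined] by simp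
    then show ?thesis by (metis (mono_tags) card.empty empty_Collect_eq not_one_le_zero)
  qed
  then show "f ` topspace seq_top = topspace seq_top" by (metis surj_def topspace_seq_top)
  show "\<exists>U. b \<in> U \<and> evenly_covered seq_top seq_top f U" for b
    using evenly_covered_cylinder cylinder_self by blast
  show "finite {x \<in> topspace seq_top. f x = b}" for b
    using finite_fibre by simp
  show "card {x \<in> topspace seq_top. f x = b} = k" for b
    using card by simp
qed

end

lemma local_homeo_imp_uniform_local_homeo:
  assumes "local_homeo seq_top seq_top (f :: (nat \<Rightarrow> 'a::finite) \<Rightarrow> (nat \<Rightarrow> 'a))"
  obtains M L where "uniform_local_homeo f M L"
proof -
  obtain M where M: "\<forall>y. \<forall>z\<in>cylinder M y. f z = f y \<longrightarrow> z = y"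
    using local_homeo_injectivity_radius[OF assms] by blast
  have "continuous_map seq_top seq_top f" using assms by (simp add: local_homeo_def)
  then obtain L where "\<forall>y. cylinder L (f y) \<subseteq> f ` cylinder M y"
    using continuous_open_map_image_radius local_homeo_imp_open_map[OF assms] by blast
  with M assms show ?thesis by (intro that[of M L]) (simp add: uniform_local_homeo_def)
qed

section \<open>Local homeomorphisms star-commuting with the shift\<close>

lemma funpow_shift: "(shift ^^ j) x = (\<lambda>i. x (i + j))"
  by (induction j arbitrary: x) (auto simp: shift_def)

lemma shift_invariant_locally_constant_imp_constant:
  assumes local: "\<And>b b'. b' \<in> cylinder L b \<Longrightarrow> g b' = g b"
    and invariant: "\<And>z. g (shift z) = g z"
  shows "g c = g c'"
proof -
  define b where "b i = (if i < L then c' i else c (i - L))" for i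
  have "g c = g ((shift ^^ L) b)" by (simp add: funpow_shift b_def)
  also have "\<dots> = g b" by (induction L) (simp_all add: invariant)
  also have "\<dots> = g c'" by (rule local) (simp add: b_def cylinder_def)
  finally show ?thesis .
qed

lemma local_homeo_star_commute_shift_imp_k_fold_covering_map:
  fixes f :: "(nat \<Rightarrow> 'a::finite) \<Rightarrow> (nat \<Rightarrow> 'a)"
  assumes "local_homeo seq_top seq_top f" and "star_commute f shift"
  shows "\<exists>k\<ge>1. k_fold_covering_map k seq_top seq_top f"
proof -
  obtain M L where "uniform_local_homeo f M L"
    using assms(1) by (rule local_homeo_imp_uniform_local_homeo)
  then interpret uniform_local_homeo f M L .
  have shift_invariant: "card {x. f x = shift z} = card {x. f x = z}" for z
    using bij_betw_same_card[OF star_commute_bij_betw_fibres[OF assms(2)]] by simp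
  have "card {x. f x = b} = card {x. f x = f undefined}" for b
    using card_fibre_cylinder shift_invariant
    by (rule shift_invariant_locally_constant_imp_constant[where g = "\<lambda>b. card {x. f x = b}"])
  then show ?thesis
    using k_fold_covering_map one_le_card_fibre[of undefined] by auto
qed

section \<open>Sliding block codes\<close>

lemma tau_shift: "tau n d (shift x) = shift (tau n d x)"
  unfolding tau_def shift_def
  by (simp add: map_Suc_upt[symmetric] map_map comp_def del: upt_Suc)

lemma shift_case_nat [simp]: "shift (case_nat a y) = y"
  by (simp add: shift_def)

lemma case_nat_shift: "case_nat (x 0) (shift x) = x"
  by (rule ext) (simp add: shift_def split: nat.split)

lemma tau_case_nat:
  assumes "n \<ge> 1"
  shows "tau n d (case_nat a y) = case_nat (d (a # map y [0..<n-1])) (tau n d y)"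
proof -
  obtain m where "n = Suc m" using assms by (cases n) auto
  then have "tau n d (case_nat a y) 0 = d (a # map y [0..<n-1])"
    by (simp add: tau_def upt_conv_Cons map_Suc_upt[symmetric] comp_def del: upt_Suc)
  moreover have "shift (tau n d (case_nat a y)) = tau n d y"
    by (simp flip: tau_shift)
  ultimately show ?thesis by (metis case_nat_shift)
qed

lemma ex1_case_nat_iff: "(\<exists>!x. \<exists>a. x = case_nat a y \<and> P a) \<longleftrightarrow> (\<exists>!a. P a)"
  by (metis nat.case(1))

text \<open>Every preimage of \<open>y\<close> under the shift is \<open>case_nat a y\<close>, and its image under the
  block code is \<open>z\<close> iff the new first symbol \<open>d (a # \<dots>)\<close> is \<open>z 0\<close>.\<close>
lemma star_commute_tau_shift_iff_regressive:
  assumes n: "n \<ge> 1"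
  shows "star_commute (tau n d) shift \<longleftrightarrow> regressive n d"
proof -
  let ?w = "\<lambda>y :: nat \<Rightarrow> 'a. map y [0..<n-1]"
  have lift: "(\<exists>!x. shift x = y \<and> tau n d x = z) \<longleftrightarrow> (\<exists>!a. d (a # ?w y) = z 0)"
    if "tau n d y = shift z" for y z
  proof -
    have "(shift x = y \<and> tau n d x = z) \<longleftrightarrow> (\<exists>a. x = case_nat a y \<and> d (a # ?w y) = z 0)" for x
      using that tau_case_nat[OF n] case_nat_shift[of x] case_nat_shift[of z]
      by (metis nat.case(1) shift_case_nat)
    then show ?thesis by (simp only: ex1_case_nat_iff)
  qed
  have "tau n d \<circ> shift = shift \<circ> tau n d" by (rule ext) (simp add: tau_shift)
  then have "star_commute (tau n d) shift \<longleftrightarrow>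
      (\<forall>y z. tau n d y = shift z \<longrightarrow> (\<exists>!a. d (a # ?w y) = z 0))"
    unfolding star_commute_def using lift by simp
  also have "\<dots> \<longleftrightarrow> (\<forall>y c. \<exists>!a. d (a # ?w y) = c)"
  proof
    assume lifts: "\<forall>y z. tau n d y = shift z \<longrightarrow> (\<exists>!a. d (a # ?w y) = z 0)"
    show "\<forall>y c. \<exists>!a. d (a # ?w y) = c"
    proof (intro allI)
      fix y c
      show "\<exists>!a. d (a # ?w y) = c" using lifts[rule_format, of y "case_nat c (tau n d y)"] by simp
    qed
  qed auto
  also have "\<dots> \<longleftrightarrow> (\<forall>w. length w = n - 1 \<longrightarrow> (\<forall>c. \<exists>!a. d (a # w) = c))"
  proof
    assume "\<forall>y c. \<exists>!a. d (a # ?w y) = c"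
    moreover have "?w (\<lambda>i. w ! i) = w" if "length w = n - 1" for w
      using that map_nth[of w] by simp
    ultimately show "\<forall>w. length w = n - 1 \<longrightarrow> (\<forall>c. \<exists>!a. d (a # w) = c)" by metis
  qed simp
  also have "\<dots> \<longleftrightarrow> regressive n d"
    unfolding regressive_def bij_iff using n by simp
  finally show ?thesis .
qed

theorem theorem5p14:
  fixes \<phi> :: "(nat \<Rightarrow> 'a::finite) \<Rightarrow> (nat \<Rightarrow> 'a)"
  assumes "sliding_block_code \<phi>"
  shows "(local_homeo seq_top seq_top \<phi> \<and> star_commute \<phi> shift) \<longleftrightarrow>
         (\<exists>k\<ge>1. k_fold_covering_map k seq_top seq_top \<phi> \<and>
                 (\<exists>n d. regressive n d \<and> \<phi> = tau n d))"
proof -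
  obtain n d where n: "n \<ge> 1" and \<phi>: "\<phi> = tau n d"
    using assms unfolding sliding_block_code_def by blast
  have regressive_codes: "(\<exists>n d. regressive n d \<and> \<phi> = tau n d) \<longleftrightarrow> star_commute \<phi> shift"
    using star_commute_tau_shift_iff_regressive regressive_def \<phi> n by metis
  show ?thesis
    using local_homeo_star_commute_shift_imp_k_fold_covering_map[of \<phi>]
      covering_map_imp_local_homeo k_fold_covering_map_def regressive_codes
    by blast
qed

end
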